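(* In the limit-point setting described in the context, it holds $P$-a.s.: (1) for every $t\in[0,T]$, $\int_E X_t\,L(\mathrm d\gamma)=q(t)$; (2) under the measure $L$, the random path $t\mapsto X_t-X_0-\sigma W_t-Z_t$ is $L$-a.s. deterministic, i.e. its law under $L$ is a Dirac mass on $C([0,T];\mathbb R)$.
   Context: Fix $T>0$, $\sigma\in\mathbb R$. Let $n(0)=-1$, $n(1)=+1$; $|k|_t$ denotes the total variation on $[0,t]$ of a continuous BV path $k$. Condition (M) on $\mu:[0,1]\to\mathbb R$: (i) $\mu$ is $C^2$ on $(0,1)$ and there is $c\ge0$ with $-(\mu(x)-\mu(y))(x-y)\le c|x-y|^2$ for $x,y\in(0,1)$; (ii) $\sup_{x\in(0,1/2)}x|\mu(x)|+\sup_{x\in(1/2,1)}(1-x)|\mu(x)|<\infty$; (iii) there is $\rho\in(0,1/2)$ with $\mathrm{sign}(x-1/2)\mu(x)\ge0$ for $x\in(0,\rho)\cup(1-\rho,1)$, and $\mu(0)=\mu(1)=0$. Condition (Q): $q:[0,T]\to[0,1]$ Lipschitz with $\xi\le q\le1-\xi$ for some $\xi\in(0,1)$. Regularizations: for each $\epsilon>0$, $\mu^\epsilon$ is $C^2$ on $[0,1]$, $\mu^\epsilon=\mu$ on $[\epsilon,1-\epsilon]$, $|\mu^\epsilon|\le|\mu|$ on $(0,1)$, and satisfies the one-sided Lipschitz inequality of (M)(i) and the sign condition of (M)(iii) with constants independent of $\epsilon$. Limit-point setting: on a filtered probability space $(\Omega,\mathcal A,(\mathcal F_t),P)$ (usual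 conditions) are given independent real Brownian motions $(W^i)_{i\ge1}$; for each $N$, $X_0^{(N)}$ is $\mathcal F_0$-measurable, $[0,1]^N$-valued with $\frac1N\sum_iX_0^{i,N}=q(0)$ a.s., and $\frac1N\sum_i\delta_{X_0^{i,N}}$ converges in law to a probability measure $\nu_0$ on $[0,1]$. $(X^{i,N,\epsilon},k^{i,N,\epsilon})_{i=1}^N$ is the solution of the particle system: $X^i$ continuous $[0,1]$-valued, $k^i$ continuous BV, progressively measurable, $X^i_0=X^{i,N}_0$, $\mathrm dX^i_t=\big(-\mu^\epsilon(X^i_t)+\frac1N\sum_{j}\mu^\epsilon(X^j_t)\big)\mathrm dt+\dot q(t)\mathrm dt+\sigma\mathrm dW^i_t-\frac{\sigma}{N}\sum_j\mathrm dW^j_t-\mathrm dk^i_t+\frac1N\sum_j\mathrm dk^j_t$, $\mathrm d|k^i|=1_{\{X^i\in\{0,1\}\}}\mathrm d|k^i|$, $\mathrm dk^i=n(X^i)\mathrm d|k^i|$. $E=C([0,T];\mathbb R)\times C([0,T];[0,1])\times C([0,T];\mathbb R)$ (uniform topology, Borel $\sigma$-algebra), with generic element $(W,X,Z)$, the symbols $W,X,Z$ also denoting the canonical projections; $\mathcal P(E)$ has the weak topology. $L^{N,\epsilon}=\frac1N\sum_{i=1}^N\delta_{(W^i,X^{i,N,\epsilon},-\int_0^\cdot\mu^\epsilon(X^{i,N,\epsilon}_r)\mathrm dr-k^{i,N,\epsilon})}$. A sequence $(N_n,\epsilon_n)$ with $N_n\to\infty$, $\epsilon_n\to0$ is fixed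 such that $\mathrm{Law}(L^{N_n,\epsilon_n})$ converges weakly to a probability measure $Q$ on $\mathcal P(E)$, and $L$ is a $\mathcal P(E)$-valued random variable defined on $(\Omega,\mathcal A,P)$ with law $Q$. *)

theory Defs
  imports "HOL-Analysis.Analysis" "HOL-Probability.Probability"
begin

definition C2_on :: "real set \<Rightarrow> (real \<Rightarrow> real) \<Rightarrow> bool" where
  "C2_on S f \<longleftrightarrow> (\<exists>f' f''. (\<forall>x\<in>S. (f has_real_derivative f' x) (at x within S)
      \<and> (f' has_real_derivative f'' x) (at x within S)) \<and> continuous_on S f'')"

definition one_sided_lip :: "real \<Rightarrow> (real \<Rightarrow> real) \<Rightarrow> bool" where
  "one_sided_lip c f \<longleftrightarrow> (\<forall>x\<in>{0<..<1}. \<forall>y\<in>{0<..<1}. - (f x - f y) * (x - y) \<le> c * (x - y)\<^sup>2)"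

definition sign_cond :: "real \<Rightarrow> (real \<Rightarrow> real) \<Rightarrow> bool" where
  "sign_cond \<rho> f \<longleftrightarrow> (\<forall>x \<in> {0<..<\<rho>} \<union> {1-\<rho><..<1}. sgn (x - 1/2) * f x \<ge> 0)"

definition condM :: "(real \<Rightarrow> real) \<Rightarrow> bool" where
  "condM mu \<longleftrightarrow>
     C2_on {0<..<1} mu \<and> (\<exists>c\<ge>0. one_sided_lip c mu)
   \<and> (\<exists>B. (\<forall>x\<in>{0<..<1/2}. x * \<bar>mu x\<bar> \<le> B) \<and> (\<forall>x\<in>{1/2<..<1}. (1 - x) * \<bar>mu x\<bar> \<le> B))
   \<and> (\<exists>\<rho>\<in>{0<..<1/2}. sign_cond \<rho> mu) \<and> mu 0 = 0 \<and> mu 1 = 0"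

definition condQ :: "real \<Rightarrow> (real \<Rightarrow> real) \<Rightarrow> bool" where
  "condQ T q \<longleftrightarrow> (\<exists>C. C-lipschitz_on {0..T} q)
     \<and> (\<exists>\<xi>\<in>{0<..<1}. \<forall>t\<in>{0..T}. \<xi> \<le> q t \<and> q t \<le> 1 - \<xi>)"

definition regularization :: "(real \<Rightarrow> real) \<Rightarrow> (real \<Rightarrow> real \<Rightarrow> real) \<Rightarrow> bool" where
  "regularization mu mueps \<longleftrightarrow> (\<exists>c\<ge>0. \<exists>\<rho>\<in>{0<..<1/2}. \<forall>\<epsilon>>0.
       C2_on {0..1} (mueps \<epsilon>)
     \<and> (\<forall>x\<in>{\<epsilon>..1-\<epsilon>}. mueps \<epsilon> x = mu x)
     \<and> (\<forall>x\<in>{0<..<1}. \<bar>mueps \<epsilon> x\<bar> \<le> \<bar>mu x\<bar>)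
     \<and> one_sided_lip c (mueps \<epsilon>) \<and> sign_cond \<rho> (mueps \<epsilon>))"

definition filtration_on :: "'a measure \<Rightarrow> (real \<Rightarrow> 'a measure) \<Rightarrow> bool" where
  "filtration_on M F \<longleftrightarrow> (\<forall>t\<ge>0. space (F t) = space M \<and> sets (F t) \<subseteq> sets M)
     \<and> (\<forall>s t. 0 \<le> s \<longrightarrow> s \<le> t \<longrightarrow> sets (F s) \<subseteq> sets (F t))"

definition usual_conditions :: "'a measure \<Rightarrow> (real \<Rightarrow> 'a measure) \<Rightarrow> bool" where
  "usual_conditions M F \<longleftrightarrow> filtration_on M F
     \<and> (\<forall>A B. B \<in> null_sets M \<longrightarrow> A \<subseteq> B \<longrightarrow> A \<in> sets (F 0))
     \<and> (\<forall>t\<ge>0. sets (F t) = (\<Inter>s\<in>{t<..}. sets (F s)))"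

definition BM_wrt :: "'a measure \<Rightarrow> (real \<Rightarrow> 'a measure) \<Rightarrow> (real \<Rightarrow> 'a \<Rightarrow> real) \<Rightarrow> bool" where
  "BM_wrt M F W \<longleftrightarrow>
     (AE \<omega> in M. W 0 \<omega> = 0 \<and> continuous_on {0..} (\<lambda>t. W t \<omega>))
   \<and> (\<forall>t\<ge>0. W t \<in> borel_measurable (F t))
   \<and> (\<forall>s t. 0 \<le> s \<longrightarrow> s < t \<longrightarrow>
        distributed M lborel (\<lambda>\<omega>. W t \<omega> - W s \<omega>) (\<lambda>x. ennreal (normal_density 0 (sqrt (t - s)) x))
      \<and> prob_space.indep_set M (sets (F s))
          (sigma_sets (space M) {(\<lambda>\<omega>. W t \<omega> - W s \<omega>) -` A \<inter> space M | A. A \<in> sets borel}))"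

definition indep_BMs :: "'a measure \<Rightarrow> (real \<Rightarrow> 'a measure) \<Rightarrow> ('i \<Rightarrow> real \<Rightarrow> 'a \<Rightarrow> real) \<Rightarrow> 'i set \<Rightarrow> bool" where
  "indep_BMs M F W I \<longleftrightarrow> (\<forall>i\<in>I. BM_wrt M F (W i))
   \<and> prob_space.indep_vars M (\<lambda>_. PiM {0..} (\<lambda>_. borel)) (\<lambda>i \<omega>. restrict (\<lambda>t. W i t \<omega>) {0..}) I
   \<and> (\<forall>s\<ge>0. prob_space.indep_set M (sets (F s))
        (sigma_sets (space M) {(\<lambda>\<omega>. W i u \<omega> - W i s \<omega>) -` A \<inter> space M | i u A. i \<in> I \<and> s \<le> u \<and> A \<in> sets borel}))"

definition progressive :: "'a measure \<Rightarrow> (real \<Rightarrow> 'a measure) \<Rightarrow> real \<Rightarrow> (real \<Rightarrow> 'a \<Rightarrow> real) \<Rightarrow> bool" where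
  "progressive M F T Y \<longleftrightarrow>
     (\<forall>t\<in>{0..T}. (\<lambda>(s, \<omega>). Y s \<omega>) \<in> borel_measurable (restrict_space borel {0..t} \<Otimes>\<^sub>M F t))"

definition variation_sums :: "(real \<Rightarrow> real) \<Rightarrow> real \<Rightarrow> real \<Rightarrow> real set" where
  "variation_sums k a b = {(\<Sum>i<n. \<bar>k (p (Suc i)) - k (p i)\<bar>) | n p.
       p 0 = a \<and> p n = b \<and> (\<forall>i<n. p i \<le> p (Suc i))}"

definition bv_on :: "(real \<Rightarrow> real) \<Rightarrow> real \<Rightarrow> real \<Rightarrow> bool" where
  "bv_on k a b \<longleftrightarrow> bdd_above (variation_sums k a b)"

definition tv :: "(real \<Rightarrow> real) \<Rightarrow> real \<Rightarrow> real \<Rightarrow> real" where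
  "tv k a b = Sup (variation_sums k a b)"

definition clamp :: "real \<Rightarrow> real \<Rightarrow> real" where
  "clamp T t = max 0 (min T t)"

text \<open>n(0) = -1, n(1) = 1 (value elsewhere irrelevant).\<close>
definition nvec :: "real \<Rightarrow> real" where
  "nvec x = (if x = 0 then -1 else if x = 1 then 1 else 0)"

text \<open>The particle system for fixed N and a fixed drift mue (= mu^eps); pathwise
  (integrated) form of the SDE, with k_0 = 0, and the Skorokhod conditions expressed with the
  Lebesgue-Stieltjes measure of t \<mapsto> |k|_t.\<close>
definition particle_solution ::
  "'a measure \<Rightarrow> (real \<Rightarrow> 'a measure) \<Rightarrow> real \<Rightarrow> real \<Rightarrow> (real \<Rightarrow> real) \<Rightarrow> (real \<Rightarrow> real) \<Rightarrow> nat
   \<Rightarrow> (nat \<Rightarrow> 'a \<Rightarrow> real) \<Rightarrow> (nat \<Rightarrow> real \<Rightarrow> 'a \<Rightarrow> real)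
   \<Rightarrow> (nat \<Rightarrow> real \<Rightarrow> 'a \<Rightarrow> real) \<Rightarrow> (nat \<Rightarrow> real \<Rightarrow> 'a \<Rightarrow> real) \<Rightarrow> bool" where
  "particle_solution M F T \<sigma> q mue N X0 W X k \<longleftrightarrow>
    (\<forall>i\<in>{1..N}. progressive M F T (X i) \<and> progressive M F T (k i))
  \<and> (AE \<omega> in M. \<forall>i\<in>{1..N}.
       continuous_on {0..T} (\<lambda>t. X i t \<omega>) \<and> (\<forall>t\<in>{0..T}. X i t \<omega> \<in> {0..1})
     \<and> continuous_on {0..T} (\<lambda>t. k i t \<omega>) \<and> bv_on (\<lambda>t. k i t \<omega>) 0 T
     \<and> X i 0 \<omega> = X0 i \<omega> \<and> k i 0 \<omega> = 0
     \<and> emeasure (interval_measure (\<lambda>t. tv (\<lambda>s. k i s \<omega>) 0 (clamp T t)))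
          {t\<in>{0..T}. X i t \<omega> \<notin> {0, 1}} = 0
     \<and> (\<forall>t\<in>{0..T}. k i t \<omega> =
          (LINT s:{0..t}|interval_measure (\<lambda>t. tv (\<lambda>s. k i s \<omega>) 0 (clamp T t)). nvec (X i s \<omega>)))
     \<and> (\<forall>t\<in>{0..T}. X i t \<omega> = X0 i \<omega>
          + (LINT r:{0..t}|lborel. - mue (X i r \<omega>) + (\<Sum>j\<in>{1..N}. mue (X j r \<omega>)) / real N)
          + (q t - q 0) + \<sigma> * W i t \<omega> - \<sigma> / real N * (\<Sum>j\<in>{1..N}. W j t \<omega>)
          - k i t \<omega> + (\<Sum>j\<in>{1..N}. k j t \<omega>) / real N))"

type_synonym path = "real \<Rightarrow>\<^sub>C real"

text \<open>C([0,T];R) is identified with the closed subspace of bounded continuous functions on R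
  that are constant outside [0,T]; sup-norm = uniform norm on [0,T].\<close>
definition Cp :: "real \<Rightarrow> path set" where
  "Cp T = {f. \<forall>t. apply_bcontfun f t = apply_bcontfun f (clamp T t)}"

definition cpath :: "real \<Rightarrow> (real \<Rightarrow> real) \<Rightarrow> path" where
  "cpath T f = Bcontfun (\<lambda>t. f (clamp T t))"

definition Eset :: "real \<Rightarrow> (path \<times> path \<times> path) set" where
  "Eset T = {(w, x, z). w \<in> Cp T \<and> x \<in> Cp T \<and> z \<in> Cp T \<and> (\<forall>t. apply_bcontfun x t \<in> {0..1})}"

definition PM :: "'b::topological_space set \<Rightarrow> 'b measure set" where
  "PM S = {\<mu>. sets \<mu> = sets borel \<and> prob_space \<mu> \<and> emeasure \<mu> S = 1}"

definition wtop :: "'b::metric_space set \<Rightarrow> 'b measure topology" where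
  "wtop S = subtopology
     (topology_generated_by {{\<mu>. (\<integral>x. apply_bcontfun f x \<partial>\<mu>) \<in> U} | (f :: 'b \<Rightarrow>\<^sub>C real) U. open U})
     (PM S)"

definition borel_top :: "'c topology \<Rightarrow> 'c measure" where
  "borel_top X = sigma (topspace X) {U. openin X U}"

definition weak_conv_top :: "'c topology \<Rightarrow> (nat \<Rightarrow> 'c measure) \<Rightarrow> 'c measure \<Rightarrow> bool" where
  "weak_conv_top X \<Lambda>s \<Lambda> \<longleftrightarrow> (\<forall>G. continuous_map X euclideanreal G \<and> (\<exists>B. \<forall>x\<in>topspace X. \<bar>G x\<bar> \<le> B)
      \<longrightarrow> (\<lambda>n. \<integral>x. G x \<partial>(\<Lambda>s n)) \<longlonglongrightarrow> (\<integral>x. G x \<partial>\<Lambda>))"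

definition emp :: "nat \<Rightarrow> (nat \<Rightarrow> 'b::topological_space) \<Rightarrow> 'b measure" where
  "emp N pts = distr (measure_pmf (pmf_of_multiset (image_mset pts (mset_set {1..N})))) borel (\<lambda>x. x)"

definition Lemp :: "real \<Rightarrow> (nat \<Rightarrow> real \<Rightarrow> 'a \<Rightarrow> real) \<Rightarrow> (real \<Rightarrow> real \<Rightarrow> real)
    \<Rightarrow> (nat \<Rightarrow> real \<Rightarrow> nat \<Rightarrow> real \<Rightarrow> 'a \<Rightarrow> real) \<Rightarrow> (nat \<Rightarrow> real \<Rightarrow> nat \<Rightarrow> real \<Rightarrow> 'a \<Rightarrow> real)
    \<Rightarrow> nat \<Rightarrow> real \<Rightarrow> 'a \<Rightarrow> (path \<times> path \<times> path) measure" where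
  "Lemp T W mueps Xp kp N \<epsilon> \<omega> = emp N (\<lambda>i.
      (cpath T (\<lambda>t. W i t \<omega>),
       cpath T (\<lambda>t. Xp N \<epsilon> i t \<omega>),
       cpath T (\<lambda>t. - (LINT r:{0..t}|lborel. mueps \<epsilon> (Xp N \<epsilon> i r \<omega>)) - kp N \<epsilon> i t \<omega>)))"

definition pathmap :: "real \<Rightarrow> path \<times> path \<times> path \<Rightarrow> path" where
  "pathmap \<sigma> \<gamma> = (case \<gamma> of (w, x, z) \<Rightarrow>
     Bcontfun (\<lambda>t. apply_bcontfun x t - apply_bcontfun x 0 - \<sigma> * apply_bcontfun w t - apply_bcontfun z t))"

end

theory Submission
  imports Defs
begin

text \<open>
  For every fixed N and \<epsilon>, the identities of the theorem hold exactly, almost surely, for the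
  empirical measure L^{N,\<epsilon>}: averaging the particle equations over i cancels all interaction
  terms, so the mean of the X^i_t is q(t); and X^i_t - X^i_0 - \<sigma> W^i_t - Z^i_t is the same number
  for every particle i, so its law under L^{N,\<epsilon>} is a Dirac mass. Both facts are equalities
  of integrals of bounded continuous test functions (the second as a vanishing variance), i.e.
  the vanishing of a nonnegative, bounded functional that is continuous for the weak topology.
  Hence the expectation of that functional under the law of L^{N,\<epsilon>} is 0, this passes to the
  weak limit Q = Law(L), and so the identities hold for L almost surely, simultaneously for all
  rational times. Continuity of the paths extends them to all of [0,T].
\<close>

section \<open>Weak limits of almost surely vanishing functionals\<close>

lemma space_borel_top[simp]: "space (borel_top X) = topspace X"
  unfolding borel_top_def by (rule space_measure_of) (auto dest: openin_subset)

lemma borel_measurable_borel_top: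
  assumes "continuous_map X euclideanreal G"
  shows "G \<in> borel_measurable (borel_top X)"
proof (rule borel_measurableI)
  fix S :: "real set" assume "open S"
  hence "openin X {x \<in> topspace X. G x \<in> S}"
    using assms by (simp add: continuous_map)
  moreover have "G -` S \<inter> space (borel_top X) = {x \<in> topspace X. G x \<in> S}"
    by auto
  moreover have "sets (borel_top X) = sigma_sets (topspace X) (Collect (openin X))"
    unfolding borel_top_def by (rule sets_measure_of) (auto dest: openin_subset)
  ultimately show "G -` S \<inter> space (borel_top X) \<in> sets (borel_top X)"
    by (auto intro: sigma_sets.Basic)
qed

text \<open>No measurability of f is needed: the exceptional set is still contained in a null set.\<close>
lemma integral_distr_eq_0_if_AE:
  fixes G :: "'c \<Rightarrow> real"
  assumes G: "G \<in> borel_measurable N" and AE: "AE \<omega> in M. G (f \<omega>) = 0"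
  shows "(\<integral>x. G x \<partial>distr M N f) = 0"
proof -
  let ?A = "{x\<in>space N. G x \<noteq> 0}"
  have A: "?A \<in> sets N" using G by measurable
  obtain Z where Z: "Z \<in> null_sets M" "{\<omega>\<in>space M. G (f \<omega>) \<noteq> 0} \<subseteq> Z"
    using AE by (auto simp: eventually_ae_filter)
  have "emeasure M (f -` ?A \<inter> space M) = 0"
  proof (cases "f -` ?A \<inter> space M \<in> sets M")
    case True
    then have "emeasure M (f -` ?A \<inter> space M) \<le> emeasure M Z"
      using Z by (intro emeasure_mono) auto
    then show ?thesis using Z(1) by (simp add: null_sets_def)
  qed (simp add: emeasure_notin_sets)
  then have "?A \<in> null_sets (distr M N f)"
    using A unfolding distr_def null_sets_def emeasure_measure_of_conv by auto
  then have "AE x in distr M N f. G x = 0"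
    by (intro AE_I'[where N="?A"]) auto
  then show ?thesis by (rule integral_eq_zero_AE)
qed

lemma AE_eq_0_if_weak_conv_top:
  fixes G :: "'c \<Rightarrow> real"
  assumes conv: "weak_conv_top X (\<lambda>n. distr M (borel_top X) (f n)) Q"
    and G_cont: "continuous_map X euclideanreal G"
    and G_bound: "\<forall>x\<in>topspace X. \<bar>G x\<bar> \<le> B" and G_nonneg: "\<forall>x\<in>topspace X. 0 \<le> G x"
    and AE_f: "eventually (\<lambda>n. AE \<omega> in M. G (f n \<omega>) = 0) sequentially"
    and M: "prob_space M" and L: "L \<in> measurable M (borel_top X)"
    and law: "distr M (borel_top X) L = Q"
  shows "AE \<omega> in M. G (L \<omega>) = 0"
proof -
  interpret prob_space M by (rule M)
  have G: "G \<in> borel_measurable (borel_top X)"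
    by (rule borel_measurable_borel_top[OF G_cont])
  have L_space: "L \<omega> \<in> topspace X" if "\<omega> \<in> space M" for \<omega>
    using measurable_space[OF L that] by simp
  have "(\<lambda>n. \<integral>x. G x \<partial>distr M (borel_top X) (f n)) \<longlonglongrightarrow> (\<integral>x. G x \<partial>Q)"
    using conv G_cont G_bound unfolding weak_conv_top_def by blast
  moreover have "eventually (\<lambda>n. (\<integral>x. G x \<partial>distr M (borel_top X) (f n)) = 0) sequentially"
    using AE_f by eventually_elim (rule integral_distr_eq_0_if_AE[OF G])
  ultimately have "(\<integral>x. G x \<partial>Q) = 0"
    by (metis LIMSEQ_unique tendsto_eventually)
  then have "(\<integral>\<omega>. G (L \<omega>) \<partial>M) = 0"
    using integral_distr[OF L G] law by simp
  moreover have "integrable M (\<lambda>\<omega>. G (L \<omega>))"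
    using L_space G_bound measurable_comp[OF L G]
    by (intro integrable_const_bound[where B=B]) (auto simp: comp_def)
  moreover have "AE \<omega> in M. 0 \<le> G (L \<omega>)"
    using L_space G_nonneg by auto
  ultimately show ?thesis
    using integral_nonneg_eq_0_iff_AE by blast
qed

section \<open>Probability measures and the weak topology\<close>

lemma topspace_wtop[simp]: "topspace (wtop S) = PM S"
proof -
  have "UNIV \<in> {{\<mu>. (\<integral>x. apply_bcontfun f x \<partial>\<mu>) \<in> U} | (f :: 'b::metric_space \<Rightarrow>\<^sub>C real) U. open U}"
    by blast
  then show ?thesis unfolding wtop_def by auto
qed

lemma continuous_map_wtop_integral:
  fixes f :: "'b::metric_space \<Rightarrow>\<^sub>C real"
  shows "continuous_map (wtop S) euclideanreal (\<lambda>\<mu>. \<integral>x. apply_bcontfun f x \<partial>\<mu>)"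
  unfolding wtop_def
proof (rule continuous_map_from_subtopology)
  let ?S = "{{\<mu>. (\<integral>x. apply_bcontfun f x \<partial>\<mu>) \<in> U} | (f :: 'b \<Rightarrow>\<^sub>C real) U. open U}"
  have "UNIV \<in> ?S" by blast
  then have top: "topspace (topology_generated_by ?S) = UNIV" by auto
  show "continuous_map (topology_generated_by ?S) euclideanreal (\<lambda>\<mu>. \<integral>x. apply_bcontfun f x \<partial>\<mu>)"
    unfolding continuous_map top
    by (auto intro: topology_generated_by_Basis)
qed

lemma PMD:
  assumes "\<mu> \<in> PM S"
  shows "prob_space \<mu>" "sets \<mu> = sets borel" "emeasure \<mu> S = 1"
  using assms unfolding PM_def by auto

lemma AE_PM:
  assumes "\<mu> \<in> PM S"
  shows "AE x in \<mu>. x \<in> S"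
proof -
  interpret prob_space \<mu>
    using PMD[OF assms] by simp
  have "S \<in> events"
    using PMD(3)[OF assms] by (metis emeasure_notin_sets zero_neq_one)
  then show ?thesis
    using PMD(3)[OF assms] by (simp add: AE_in_set_eq_1 emeasure_eq_measure)
qed

lemma measurable_continuous_sets_borel:
  "sets \<mu> = sets borel \<Longrightarrow> continuous_on UNIV g \<Longrightarrow> g \<in> borel_measurable \<mu>"
  using measurable_cong_sets borel_measurable_continuous_onI by blast

lemma integrable_bcontfun:
  fixes f :: "'b::metric_space \<Rightarrow>\<^sub>C real"
  assumes "finite_measure \<mu>" "sets \<mu> = sets borel"
  shows "integrable \<mu> (apply_bcontfun f)"
  using assms
  by (intro finite_measure.integrable_const_bound[where B="norm f"] AE_I2 norm_bounded
      measurable_continuous_sets_borel) auto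

lemma abs_integral_bcontfun_le:
  fixes f :: "'b::metric_space \<Rightarrow>\<^sub>C real"
  assumes \<mu>: "prob_space \<mu>" "sets \<mu> = sets borel" and bound: "\<forall>x. \<bar>apply_bcontfun f x\<bar> \<le> c"
  shows "\<bar>\<integral>x. apply_bcontfun f x \<partial>\<mu>\<bar> \<le> c"
proof -
  interpret prob_space \<mu> by (rule \<mu>(1))
  have "\<bar>\<integral>x. apply_bcontfun f x \<partial>\<mu>\<bar> \<le> (\<integral>x. \<bar>apply_bcontfun f x\<bar> \<partial>\<mu>)"
    using integral_norm_bound[of \<mu> "apply_bcontfun f"] by simp
  also have "\<dots> \<le> (\<integral>x. c \<partial>\<mu>)"
    using bound integrable_bcontfun[OF finite_measure_axioms \<mu>(2)]
    by (intro integral_mono) auto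
  finally show ?thesis by (simp add: prob_space)
qed

lemma (in prob_space) AE_eq_expectation_if_variance_eq_0:
  fixes f :: "'a \<Rightarrow> real"
  assumes "integrable M f" "integrable M (\<lambda>x. (f x)\<^sup>2)" "variance f = 0"
  shows "AE x in M. f x = expectation f"
proof -
  have "integrable M (\<lambda>x. (f x - expectation f)\<^sup>2)"
    unfolding power2_diff using assms(1,2) by auto
  then have "AE x in M. (f x - expectation f)\<^sup>2 = 0"
    using assms(3) integral_nonneg_eq_0_iff_AE[of M "\<lambda>x. (f x - expectation f)\<^sup>2"] by simp
  then show ?thesis by eventually_elim simp
qed

lemma integral_emp:
  fixes f :: "'b::topological_space \<Rightarrow>\<^sub>C real"
  assumes "N \<ge> 1"
  shows "(\<integral>x. apply_bcontfun f x \<partial>emp N pts) = (\<Sum>i\<in>{1..N}. apply_bcontfun f (pts i)) / real N"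
proof -
  have "pmf_of_multiset (image_mset pts (mset_set {1..N})) = map_pmf pts (pmf_of_set {1..N})"
    using assms by (subst map_pmf_of_set) auto
  then show ?thesis
    using assms unfolding emp_def
    by (simp add: integral_distr integral_pmf_of_set borel_measurable_continuous_onI)
qed

section \<open>Paths\<close>

lemma continuous_on_apply_bcontfun_at[continuous_intros]:
  fixes g :: "'b::topological_space \<Rightarrow> ('c::topological_space \<Rightarrow>\<^sub>C real)"
  assumes "continuous_on S g"
  shows "continuous_on S (\<lambda>\<gamma>. apply_bcontfun (g \<gamma>) t)"
proof -
  have "1-lipschitz_on UNIV (\<lambda>p::'c \<Rightarrow>\<^sub>C real. apply_bcontfun p t)"
    by (rule lipschitz_onI) (auto simp: dist_bounded)
  then have "continuous_on UNIV (\<lambda>p::'c \<Rightarrow>\<^sub>C real. apply_bcontfun p t)"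
    by (rule lipschitz_on_continuous_on)
  then show ?thesis
    using continuous_on_compose2[OF _ assms] by blast
qed

lemma apply_pathmap:
  "apply_bcontfun (pathmap \<sigma> (w, x, z)) t
     = apply_bcontfun x t - apply_bcontfun x 0 - \<sigma> * apply_bcontfun w t - apply_bcontfun z t"
proof -
  have "(\<lambda>t. apply_bcontfun x t - apply_bcontfun x 0 - \<sigma> * apply_bcontfun w t - apply_bcontfun z t)
      \<in> bcontfun"
  proof (rule bcontfun_normI)
    show "continuous_on UNIV
        (\<lambda>t. apply_bcontfun x t - apply_bcontfun x 0 - \<sigma> * apply_bcontfun w t - apply_bcontfun z t)"
      by (intro continuous_intros continuous_on_apply_bcontfun)
    fix t
    have "\<bar>apply_bcontfun x t\<bar> \<le> norm x" "\<bar>apply_bcontfun x 0\<bar> \<le> norm x"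
      "\<bar>apply_bcontfun w t\<bar> \<le> norm w" "\<bar>apply_bcontfun z t\<bar> \<le> norm z"
      using norm_bounded[of x] norm_bounded[of w] norm_bounded[of z] by auto
    then have "\<bar>\<sigma> * apply_bcontfun w t\<bar> \<le> \<bar>\<sigma>\<bar> * norm w"
      and "\<bar>apply_bcontfun x t\<bar> \<le> norm x" "\<bar>apply_bcontfun x 0\<bar> \<le> norm x"
      "\<bar>apply_bcontfun z t\<bar> \<le> norm z"
      by (auto simp: abs_mult mult_left_mono)
    then show "norm (apply_bcontfun x t - apply_bcontfun x 0 - \<sigma> * apply_bcontfun w t
        - apply_bcontfun z t) \<le> norm x + norm x + \<bar>\<sigma>\<bar> * norm w + norm z"
      by simp
  qed
  then show ?thesis
    unfolding pathmap_def by (simp add: Bcontfun_inverse)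
qed

lemma lipschitz_on_pathmap: "(3 + \<bar>\<sigma>\<bar>)-lipschitz_on UNIV (pathmap \<sigma>)"
proof (rule lipschitz_onI)
  fix \<gamma> \<gamma>' :: "path \<times> path \<times> path"
  obtain w x z w' x' z' where \<gamma>: "\<gamma> = (w, x, z)" and \<gamma>': "\<gamma>' = (w', x', z')"
    by (cases \<gamma>, cases \<gamma>') auto
  have dw: "dist w w' \<le> dist \<gamma> \<gamma>'" and dxz: "dist (x, z) (x', z') \<le> dist \<gamma> \<gamma>'"
    unfolding \<gamma> \<gamma>' using dist_fst_le dist_snd_le by fastforce+
  have dx: "dist x x' \<le> dist \<gamma> \<gamma>'" and dz: "dist z z' \<le> dist \<gamma> \<gamma>'"
    using dist_fst_le[of "(x, z)" "(x', z')"] dist_snd_le[of "(x, z)" "(x', z')"] dxz by auto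
  have "dist (pathmap \<sigma> \<gamma>) (pathmap \<sigma> \<gamma>') \<le> dist x x' + dist x x' + \<bar>\<sigma>\<bar> * dist w w' + dist z z'"
  proof (rule dist_bound)
    fix t
    have "\<bar>apply_bcontfun v s - apply_bcontfun v' s\<bar> \<le> dist v v'" for v v' :: path and s
      using dist_bounded[of v s v'] by (simp add: dist_real_def)
    then have "\<bar>apply_bcontfun x t - apply_bcontfun x' t\<bar> \<le> dist x x'"
      "\<bar>apply_bcontfun x 0 - apply_bcontfun x' 0\<bar> \<le> dist x x'"
      "\<bar>\<sigma> * apply_bcontfun w t - \<sigma> * apply_bcontfun w' t\<bar> \<le> \<bar>\<sigma>\<bar> * dist w w'"
      "\<bar>apply_bcontfun z t - apply_bcontfun z' t\<bar> \<le> dist z z'"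
      by (auto simp: abs_mult right_diff_distrib[symmetric] mult_left_mono)
    then show "dist (apply_bcontfun (pathmap \<sigma> \<gamma>) t) (apply_bcontfun (pathmap \<sigma> \<gamma>') t)
        \<le> dist x x' + dist x x' + \<bar>\<sigma>\<bar> * dist w w' + dist z z'"
      unfolding \<gamma> \<gamma>' apply_pathmap dist_real_def by simp
  qed
  also have "\<dots> \<le> (3 + \<bar>\<sigma>\<bar>) * dist \<gamma> \<gamma>'"
    using dx dz mult_left_mono[OF dw, of "\<bar>\<sigma>\<bar>"] by (simp add: algebra_simps)
  finally show "dist (pathmap \<sigma> \<gamma>) (pathmap \<sigma> \<gamma>') \<le> (3 + \<bar>\<sigma>\<bar>) * dist \<gamma> \<gamma>'" .
qed simp

lemma continuous_on_pathmap: "continuous_on S (pathmap \<sigma>)"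
  using lipschitz_on_continuous_on[OF lipschitz_on_pathmap] continuous_on_subset by blast

lemma clamp_eq: "t \<in> {0..T} \<Longrightarrow> clamp T t = t"
  by (auto simp: clamp_def)

lemma clamp_in: "T \<ge> 0 \<Longrightarrow> clamp T t \<in> {0..T}"
  by (auto simp: clamp_def)

lemma apply_cpath:
  assumes T: "T \<ge> 0" and f: "continuous_on {0..T} f"
  shows "apply_bcontfun (cpath T f) t = f (clamp T t)"
proof -
  have "continuous_on UNIV (\<lambda>t. f (clamp T t))"
    using clamp_in[OF T]
    by (intro continuous_on_compose2[OF f]) (auto simp: clamp_def intro!: continuous_intros)
  moreover obtain B where "\<forall>y\<in>f ` {0..T}. norm y \<le> B"
    using compact_imp_bounded[OF compact_continuous_image[OF f compact_Icc]] bounded_iff by metis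
  ultimately have "(\<lambda>t. f (clamp T t)) \<in> bcontfun"
    using clamp_in[OF T] by (intro bcontfun_normI[of _ B]) auto
  then show ?thesis unfolding cpath_def by (simp add: Bcontfun_inverse)
qed

lemma pathmap_in_Cp:
  assumes "\<gamma> \<in> Eset T"
  shows "pathmap \<sigma> \<gamma> \<in> Cp T"
proof -
  obtain w x z where \<gamma>: "\<gamma> = (w, x, z)" and "w \<in> Cp T" "x \<in> Cp T" "z \<in> Cp T"
    using assms unfolding Eset_def by auto
  moreover have "apply_bcontfun v t = apply_bcontfun v (clamp T t)" if "v \<in> Cp T" for v t
    using that unfolding Cp_def by blast
  ultimately show ?thesis
    unfolding Cp_def mem_Collect_eq \<gamma> apply_pathmap by presburger
qed

lemma rational_seq_tendsto:
  fixes t T :: real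
  assumes t: "t \<in> {0..T}"
  obtains d where "\<And>n. d n \<in> {0..T} \<inter> \<rat>" and "d \<longlonglongrightarrow> t"
proof -
  define d where "d n = of_int \<lfloor>t * real (Suc n)\<rfloor> / real (Suc n)" for n
  have upper: "d n \<le> t" for n
    unfolding d_def by (simp add: divide_le_eq)
  have lower: "t - 1 / real (Suc n) \<le> d n" for n
  proof -
    have "t - 1 / real (Suc n) = (t * real (Suc n) - 1) / real (Suc n)"
      by (simp add: field_simps)
    also have "\<dots> \<le> d n"
      unfolding d_def by (rule divide_right_mono) (linarith, simp)
    finally show ?thesis .
  qed
  have "(\<lambda>n. t - 1 / real (Suc n)) \<longlonglongrightarrow> t - 0"
    by (intro tendsto_intros LIMSEQ_inverse_real_of_nat[unfolded inverse_eq_divide])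
  then have lim: "(\<lambda>n. t - 1 / real (Suc n)) \<longlonglongrightarrow> t"
    by simp
  have "d \<longlonglongrightarrow> t"
    by (rule tendsto_sandwich[OF _ _ lim tendsto_const]) (use lower upper in \<open>auto simp del: of_nat_Suc\<close>)
  moreover have "0 \<le> d n" "d n \<in> \<rat>" for n
    unfolding d_def using t by auto
  ultimately show thesis
    using that upper t by (meson IntI atLeastAtMost_iff order_trans)
qed

lemma continuous_on_eq_if_eq_on_rationals:
  fixes f g :: "real \<Rightarrow> 'a::t2_space"
  assumes f: "continuous_on {0..T} f" and g: "continuous_on {0..T} g"
    and eq: "\<forall>s\<in>{0..T} \<inter> \<rat>. f s = g s" and t: "t \<in> {0..T}"
  shows "f t = g t"
proof -
  obtain d where d: "\<And>n. d n \<in> {0..T} \<inter> \<rat>" "d \<longlonglongrightarrow> t"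
    using rational_seq_tendsto[OF t] by blast
  have "(\<lambda>n. f (d n)) \<longlonglongrightarrow> f t" "(\<lambda>n. g (d n)) \<longlonglongrightarrow> g t"
    using continuous_on_tendsto_compose[OF _ d(2) t] f g d(1) by auto
  moreover have "(\<lambda>n. f (d n)) = (\<lambda>n. g (d n))"
    using eq d(1) by auto
  ultimately show ?thesis
    using LIMSEQ_unique by metis
qed

lemma pathmap_eq_if_eq_on_rationals:
  assumes "\<gamma> \<in> Eset T" "\<gamma>' \<in> Eset T" "T \<ge> 0"
    and eq: "\<forall>s\<in>{0..T} \<inter> \<rat>. apply_bcontfun (pathmap \<sigma> \<gamma>) s = apply_bcontfun (pathmap \<sigma> \<gamma>') s"
  shows "pathmap \<sigma> \<gamma> = pathmap \<sigma> \<gamma>'"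
proof (rule bcontfun_eqI)
  fix t
  have "apply_bcontfun (pathmap \<sigma> \<gamma>) (clamp T t) = apply_bcontfun (pathmap \<sigma> \<gamma>') (clamp T t)"
    using continuous_on_eq_if_eq_on_rationals[OF _ _ eq clamp_in[OF \<open>T \<ge> 0\<close>]] by simp
  then show "apply_bcontfun (pathmap \<sigma> \<gamma>) t = apply_bcontfun (pathmap \<sigma> \<gamma>') t"
    using pathmap_in_Cp[OF assms(1)] pathmap_in_Cp[OF assms(2)] unfolding Cp_def by auto
qed

section \<open>Test functions and the moment defect\<close>

lemma apply_Bcontfun:
  "continuous_on UNIV f \<Longrightarrow> (\<And>x. norm (f x) \<le> b) \<Longrightarrow> apply_bcontfun (Bcontfun f) = f"
  by (rule Bcontfun_inverse, rule bcontfun_normI)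

text \<open>
  Clipping and arctan make the test functions bounded on the whole product space; on
  Eset T the clipping is inactive, and arctan is injective.
\<close>
definition clip_X :: "real \<Rightarrow> (path \<times> path \<times> path) \<Rightarrow>\<^sub>C real" where
  "clip_X t = Bcontfun (\<lambda>\<gamma>. max 0 (min 1 (apply_bcontfun (fst (snd \<gamma>)) t)))"

definition arctan_Y :: "real \<Rightarrow> real \<Rightarrow> (path \<times> path \<times> path) \<Rightarrow>\<^sub>C real" where
  "arctan_Y \<sigma> t = Bcontfun (\<lambda>\<gamma>. arctan (apply_bcontfun (pathmap \<sigma> \<gamma>) t))"

definition arctan_Y_sq :: "real \<Rightarrow> real \<Rightarrow> (path \<times> path \<times> path) \<Rightarrow>\<^sub>C real" where
  "arctan_Y_sq \<sigma> t = Bcontfun (\<lambda>\<gamma>. (arctan (apply_bcontfun (pathmap \<sigma> \<gamma>) t))\<^sup>2)"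

lemma apply_clip_X: "apply_bcontfun (clip_X t) = (\<lambda>\<gamma>. max 0 (min 1 (apply_bcontfun (fst (snd \<gamma>)) t)))"
  unfolding clip_X_def by (rule apply_Bcontfun[where b=1]) (auto intro!: continuous_intros)

lemma abs_arctan_le: "\<bar>arctan x\<bar> \<le> pi / 2"
  using arctan_bounded[of x] by auto

lemma arctan_sq_le: "(arctan x)\<^sup>2 \<le> (pi / 2)\<^sup>2"
  using power_mono[OF abs_arctan_le[of x], of 2] by simp

lemma apply_arctan_Y: "apply_bcontfun (arctan_Y \<sigma> t) = (\<lambda>\<gamma>. arctan (apply_bcontfun (pathmap \<sigma> \<gamma>) t))"
  unfolding arctan_Y_def
proof (rule apply_Bcontfun[where b="pi/2"])
  show "continuous_on UNIV (\<lambda>\<gamma>. arctan (apply_bcontfun (pathmap \<sigma> \<gamma>) t))"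
    by (intro continuous_intros continuous_on_pathmap)
  show "norm (arctan (apply_bcontfun (pathmap \<sigma> \<gamma>) t)) \<le> pi/2" for \<gamma>
    using abs_arctan_le by simp
qed

lemma apply_arctan_Y_sq:
  "apply_bcontfun (arctan_Y_sq \<sigma> t) = (\<lambda>\<gamma>. (arctan (apply_bcontfun (pathmap \<sigma> \<gamma>) t))\<^sup>2)"
  unfolding arctan_Y_sq_def
proof (rule apply_Bcontfun[where b="(pi/2)\<^sup>2"])
  show "continuous_on UNIV (\<lambda>\<gamma>. (arctan (apply_bcontfun (pathmap \<sigma> \<gamma>) t))\<^sup>2)"
    by (intro continuous_intros continuous_on_pathmap)
  show "norm ((arctan (apply_bcontfun (pathmap \<sigma> \<gamma>) t))\<^sup>2) \<le> (pi/2)\<^sup>2" for \<gamma>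
    using arctan_sq_le by simp
qed

definition moment_defect :: "real \<Rightarrow> (real \<Rightarrow> real) \<Rightarrow> real \<Rightarrow> (path \<times> path \<times> path) measure \<Rightarrow> real"
  where "moment_defect \<sigma> q t \<mu> =
    \<bar>(\<integral>\<gamma>. apply_bcontfun (clip_X t) \<gamma> \<partial>\<mu>) - q t\<bar>
    + \<bar>(\<integral>\<gamma>. apply_bcontfun (arctan_Y_sq \<sigma> t) \<gamma> \<partial>\<mu>) - (\<integral>\<gamma>. apply_bcontfun (arctan_Y \<sigma> t) \<gamma> \<partial>\<mu>)\<^sup>2\<bar>"

lemma moment_defect_nonneg: "0 \<le> moment_defect \<sigma> q t \<mu>"
  by (simp add: moment_defect_def)

lemma moment_defect_eq_0_iff:
  "moment_defect \<sigma> q t \<mu> = 0 \<longleftrightarrow>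
     (\<integral>\<gamma>. apply_bcontfun (clip_X t) \<gamma> \<partial>\<mu>) = q t
   \<and> (\<integral>\<gamma>. apply_bcontfun (arctan_Y_sq \<sigma> t) \<gamma> \<partial>\<mu>) = (\<integral>\<gamma>. apply_bcontfun (arctan_Y \<sigma> t) \<gamma> \<partial>\<mu>)\<^sup>2"
  unfolding moment_defect_def by linarith

lemma continuous_map_moment_defect:
  "continuous_map (wtop S) euclideanreal (moment_defect \<sigma> q t)"
  unfolding moment_defect_def by (intro continuous_intros continuous_map_wtop_integral)

lemma abs_moment_defect_le:
  assumes "\<mu> \<in> PM S"
  shows "\<bar>moment_defect \<sigma> q t \<mu>\<bar> \<le> 1 + \<bar>q t\<bar> + 2 * (pi/2)\<^sup>2"
proof -
  note le = abs_integral_bcontfun_le[OF PMD(1,2)[OF assms]]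
  have "\<bar>\<integral>\<gamma>. apply_bcontfun (clip_X t) \<gamma> \<partial>\<mu>\<bar> \<le> 1"
    by (rule le) (simp add: apply_clip_X)
  moreover have "\<bar>\<integral>\<gamma>. apply_bcontfun (arctan_Y_sq \<sigma> t) \<gamma> \<partial>\<mu>\<bar> \<le> (pi/2)\<^sup>2"
    by (rule le) (simp add: apply_arctan_Y_sq arctan_sq_le)
  moreover have "\<bar>\<integral>\<gamma>. apply_bcontfun (arctan_Y \<sigma> t) \<gamma> \<partial>\<mu>\<bar> \<le> pi/2"
    by (rule le) (simp only: apply_arctan_Y abs_arctan_le simp_thms)
  then have "\<bar>(\<integral>\<gamma>. apply_bcontfun (arctan_Y \<sigma> t) \<gamma> \<partial>\<mu>)\<^sup>2\<bar> \<le> (pi/2)\<^sup>2"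
    using power_mono[of _ "pi/2" 2] by fastforce
  ultimately show ?thesis
    unfolding moment_defect_def by linarith
qed

section \<open>The particle system at fixed N and \<epsilon>\<close>

lemma set_integral_sum:
  fixes f :: "'i \<Rightarrow> 'a \<Rightarrow> real"
  assumes "\<And>i. i \<in> I \<Longrightarrow> set_integrable M A (f i)"
  shows "(LINT x:A|M. (\<Sum>i\<in>I. f i x)) = (\<Sum>i\<in>I. LINT x:A|M. f i x)"
  using assms unfolding set_lebesgue_integral_def set_integrable_def
  by (simp add: sum_distrib_left integral_sum)

lemma continuous_on_set_integral_Icc:
  fixes g :: "real \<Rightarrow> real"
  assumes g: "continuous_on {0..T} g"
  shows "continuous_on {0..T} (\<lambda>t. LINT r:{0..t}|lborel. g r)"
proof -
  have "continuous_on {0..T} (\<lambda>t. integral {0..t} g)"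
    by (rule indefinite_integral_continuous_1, rule integrable_continuous_real[OF g])
  moreover have "(LINT r:{0..t}|lborel. g r) = integral {0..t} g" if "t \<in> {0..T}" for t
    using that g
    by (intro set_borel_integral_eq_integral(2) borel_integrable_atLeastAtMost')
      (auto intro: continuous_on_subset)
  ultimately show ?thesis
    using continuous_on_cong by (metis (no_types, lifting))
qed

lemma particle_identities:
  fixes m :: "real \<Rightarrow> real" and X k W :: "nat \<Rightarrow> real \<Rightarrow> real" and init :: "nat \<Rightarrow> real"
  assumes N: "N \<ge> 1" and m: "continuous_on {0..1} m"
    and X: "\<forall>i\<in>{1..N}. continuous_on {0..T} (X i) \<and> (\<forall>t\<in>{0..T}. X i t \<in> {0..1})"
    and eq: "\<forall>i\<in>{1..N}. \<forall>t\<in>{0..T}. X i t = init i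
          + (LINT r:{0..t}|lborel. - m (X i r) + (\<Sum>j\<in>{1..N}. m (X j r)) / real N)
          + (q t - q 0) + \<sigma> * W i t - \<sigma> / real N * (\<Sum>j\<in>{1..N}. W j t)
          - k i t + (\<Sum>j\<in>{1..N}. k j t) / real N"
    and t: "t \<in> {0..T}"
  shows "(\<Sum>i\<in>{1..N}. X i t) / real N = (\<Sum>i\<in>{1..N}. init i) / real N + q t - q 0"
    and "\<exists>C. \<forall>i\<in>{1..N}. X i t - init i - \<sigma> * W i t - (- (LINT r:{0..t}|lborel. m (X i r)) - k i t) = C"
proof -
  define I where "I i = (LINT r:{0..t}|lborel. m (X i r))" for i
  define C where "C = (\<Sum>j\<in>{1..N}. I j) / real N + (q t - q 0)
    - \<sigma> / real N * (\<Sum>j\<in>{1..N}. W j t) + (\<Sum>j\<in>{1..N}. k j t) / real N"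
  have cont: "continuous_on {0..t} (\<lambda>r. m (X i r))" if "i \<in> {1..N}" for i
  proof -
    have "{0..t} \<subseteq> {0..T}"
      using t by auto
    then have "continuous_on {0..t} (X i)" "X i ` {0..t} \<subseteq> {0..1}"
      using X that continuous_on_subset by blast+
    then show ?thesis
      by (rule continuous_on_compose2[OF m])
  qed
  have "(LINT r:{0..t}|lborel. - m (X i r) + (\<Sum>j\<in>{1..N}. m (X j r)) / real N)
      = - I i + (\<Sum>j\<in>{1..N}. I j) / real N" if "i \<in> {1..N}" for i
  proof -
    have "set_integrable lborel {0..t} (\<lambda>r. m (X i r))"
      "set_integrable lborel {0..t} (\<lambda>r. - m (X i r))"
      "set_integrable lborel {0..t} (\<lambda>r. (\<Sum>j\<in>{1..N}. m (X j r)) / real N)"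
      using cont that by (auto intro!: borel_integrable_atLeastAtMost' continuous_intros)
    moreover have "(LINT r:{0..t}|lborel. (\<Sum>j\<in>{1..N}. m (X j r))) = (\<Sum>j\<in>{1..N}. I j)"
      unfolding I_def using cont by (intro set_integral_sum borel_integrable_atLeastAtMost')
    ultimately show ?thesis
      unfolding set_integral_add(2) by (simp add: set_integral_uminus I_def)
  qed
  then have Xt: "X i t = init i - I i + \<sigma> * W i t - k i t + C" if "i \<in> {1..N}" for i
    using eq that t unfolding C_def by auto
  then show "\<exists>C. \<forall>i\<in>{1..N}. X i t - init i - \<sigma> * W i t - (- (LINT r:{0..t}|lborel. m (X i r)) - k i t) = C"
    unfolding I_def by (intro exI[of _ C]) auto
  have "(\<Sum>i\<in>{1..N}. X i t) = (\<Sum>i\<in>{1..N}. init i - I i + \<sigma> * W i t - k i t + C)"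
    using Xt by simp
  also have "\<dots> = (\<Sum>i\<in>{1..N}. init i) - (\<Sum>i\<in>{1..N}. I i) + \<sigma> * (\<Sum>i\<in>{1..N}. W i t)
      - (\<Sum>i\<in>{1..N}. k i t) + real N * C"
    by (simp add: sum.distrib sum_subtractf sum_distrib_left)
  also have "\<dots> = (\<Sum>i\<in>{1..N}. init i) + real N * (q t - q 0)"
    using N unfolding C_def by (simp add: field_simps)
  finally show "(\<Sum>i\<in>{1..N}. X i t) / real N = (\<Sum>i\<in>{1..N}. init i) / real N + q t - q 0"
    using N by (simp add: field_simps)
qed

lemma C2_on_imp_continuous_on: "C2_on S f \<Longrightarrow> continuous_on S f"
  unfolding C2_on_def by (auto intro: DERIV_continuous_on)

lemma moment_defect_emp_eq_0:
  fixes m :: "real \<Rightarrow> real" and X k W :: "nat \<Rightarrow> real \<Rightarrow> real" and init :: "nat \<Rightarrow> real"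
  assumes N: "N \<ge> 1" and m: "continuous_on {0..1} m" and T: "T \<ge> 0"
    and X: "\<forall>i\<in>{1..N}. continuous_on {0..T} (X i) \<and> (\<forall>t\<in>{0..T}. X i t \<in> {0..1})"
    and W: "\<forall>i\<in>{1..N}. continuous_on {0..T} (W i)"
    and k: "\<forall>i\<in>{1..N}. continuous_on {0..T} (k i)"
    and X0: "\<forall>i\<in>{1..N}. X i 0 = init i"
    and eq: "\<forall>i\<in>{1..N}. \<forall>t\<in>{0..T}. X i t = init i
          + (LINT r:{0..t}|lborel. - m (X i r) + (\<Sum>j\<in>{1..N}. m (X j r)) / real N)
          + (q t - q 0) + \<sigma> * W i t - \<sigma> / real N * (\<Sum>j\<in>{1..N}. W j t)
          - k i t + (\<Sum>j\<in>{1..N}. k j t) / real N"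
    and mean: "(\<Sum>i\<in>{1..N}. init i) / real N = q 0"
    and t: "t \<in> {0..T}"
  shows "moment_defect \<sigma> q t (emp N (\<lambda>i. (cpath T (W i), cpath T (X i),
            cpath T (\<lambda>t. - (LINT r:{0..t}|lborel. m (X i r)) - k i t)))) = 0"
proof -
  define Z where "Z i t = - (LINT r:{0..t}|lborel. m (X i r)) - k i t" for i t
  define pts where "pts i = (cpath T (W i), cpath T (X i), cpath T (Z i))" for i
  have Z: "continuous_on {0..T} (Z i)" if "i \<in> {1..N}" for i
  proof -
    have "continuous_on {0..T} (\<lambda>r. m (X i r))"
      using X that by (intro continuous_on_compose2[OF m]) auto
    then show ?thesis
      unfolding Z_def using k that by (intro continuous_intros continuous_on_set_integral_Icc) auto
  qed
  have clamp: "clamp T t = t" "clamp T 0 = 0"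
    using t T by (auto simp: clamp_eq)
  have X_pts: "apply_bcontfun (fst (snd (pts i))) t = X i t"
    and pathmap_pts: "apply_bcontfun (pathmap \<sigma> (pts i)) t = X i t - init i - \<sigma> * W i t - Z i t"
    if "i \<in> {1..N}" for i
    using that X W Z[OF that] X0 unfolding pts_def
    by (simp_all add: apply_pathmap apply_cpath[OF T] clamp)
  obtain C where C: "\<forall>i\<in>{1..N}. X i t - init i - \<sigma> * W i t - Z i t = C"
    using particle_identities(2)[OF N m X eq t] unfolding Z_def by blast
  have "(\<integral>\<gamma>. apply_bcontfun (clip_X t) \<gamma> \<partial>emp N pts) = (\<Sum>i\<in>{1..N}. X i t) / real N"
    unfolding integral_emp[OF N] using X t by (simp add: apply_clip_X X_pts)
  also have "\<dots> = q t"
    using particle_identities(1)[OF N m X eq t] mean by simp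
  finally have "(\<integral>\<gamma>. apply_bcontfun (clip_X t) \<gamma> \<partial>emp N pts) = q t" .
  moreover have "(\<integral>\<gamma>. apply_bcontfun (arctan_Y \<sigma> t) \<gamma> \<partial>emp N pts) = arctan C"
    and "(\<integral>\<gamma>. apply_bcontfun (arctan_Y_sq \<sigma> t) \<gamma> \<partial>emp N pts) = (arctan C)\<^sup>2"
    unfolding integral_emp[OF N] using N C by (simp_all add: apply_arctan_Y apply_arctan_Y_sq pathmap_pts)
  ultimately show ?thesis
    unfolding moment_defect_eq_0_iff pts_def Z_def by simp
qed

lemma AE_moment_defect_Lemp_eq_0:
  assumes T: "T \<ge> 0" and reg: "regularization mu mueps" and BMs: "indep_BMs M F W {1..}"
    and mean: "\<forall>N\<ge>1. AE \<omega> in M. (\<Sum>i\<in>{1..N}. X0 N i \<omega>) / real N = q 0"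
    and sol: "\<forall>N\<ge>1. \<forall>\<epsilon>>0. particle_solution M F T \<sigma> q (mueps \<epsilon>) N (X0 N) W (Xp N \<epsilon>) (kp N \<epsilon>)"
    and N: "N \<ge> 1" and \<epsilon>: "\<epsilon> > 0" and t: "t \<in> {0..T}"
  shows "AE \<omega> in M. moment_defect \<sigma> q t (Lemp T W mueps Xp kp N \<epsilon> \<omega>) = 0"
proof -
  have m: "continuous_on {0..1} (mueps \<epsilon>)"
    using reg \<epsilon> unfolding regularization_def by (auto intro: C2_on_imp_continuous_on)
  have "AE \<omega> in M. \<forall>i\<in>{1..N}. continuous_on {0..T} (\<lambda>t. W i t \<omega>)"
  proof (rule AE_finite_allI)
    fix i assume "i \<in> {1..N}"
    then have "AE \<omega> in M. continuous_on {0..} (\<lambda>t. W i t \<omega>)"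
      using BMs unfolding indep_BMs_def BM_wrt_def by auto
    then show "AE \<omega> in M. continuous_on {0..T} (\<lambda>t. W i t \<omega>)"
      by eventually_elim (auto intro: continuous_on_subset)
  qed simp
  moreover have "AE \<omega> in M. (\<Sum>i\<in>{1..N}. X0 N i \<omega>) / real N = q 0"
    using mean N by blast
  moreover have "AE \<omega> in M. \<forall>i\<in>{1..N}.
       continuous_on {0..T} (\<lambda>t. Xp N \<epsilon> i t \<omega>) \<and> (\<forall>t\<in>{0..T}. Xp N \<epsilon> i t \<omega> \<in> {0..1})
     \<and> continuous_on {0..T} (\<lambda>t. kp N \<epsilon> i t \<omega>) \<and> Xp N \<epsilon> i 0 \<omega> = X0 N i \<omega>
     \<and> (\<forall>t\<in>{0..T}. Xp N \<epsilon> i t \<omega> = X0 N i \<omega>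
          + (LINT r:{0..t}|lborel. - mueps \<epsilon> (Xp N \<epsilon> i r \<omega>) + (\<Sum>j\<in>{1..N}. mueps \<epsilon> (Xp N \<epsilon> j r \<omega>)) / real N)
          + (q t - q 0) + \<sigma> * W i t \<omega> - \<sigma> / real N * (\<Sum>j\<in>{1..N}. W j t \<omega>)
          - kp N \<epsilon> i t \<omega> + (\<Sum>j\<in>{1..N}. kp N \<epsilon> j t \<omega>) / real N)"
  proof -
    have "particle_solution M F T \<sigma> q (mueps \<epsilon>) N (X0 N) W (Xp N \<epsilon>) (kp N \<epsilon>)"
      using sol N \<epsilon> by blast
    then show ?thesis
      unfolding particle_solution_def by (elim conjE) (erule eventually_mono, blast)
  qed
  ultimately show ?thesis
  proof eventually_elim
    case (elim \<omega>)
    show ?case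
      unfolding Lemp_def
      by (rule moment_defect_emp_eq_0[where init="\<lambda>i. X0 N i \<omega>", OF N m T _ _ _ _ _ _ t])
        (use elim in blast)+
  qed
qed

section \<open>Passage to the limit\<close>

lemma AE_moment_defect_L_eq_0:
  assumes T: "T \<ge> 0" and reg: "regularization mu mueps" and BMs: "indep_BMs M F W {1..}"
    and mean: "\<forall>N\<ge>1. AE \<omega> in M. (\<Sum>i\<in>{1..N}. X0 N i \<omega>) / real N = q 0"
    and sol: "\<forall>N\<ge>1. \<forall>\<epsilon>>0. particle_solution M F T \<sigma> q (mueps \<epsilon>) N (X0 N) W (Xp N \<epsilon>) (kp N \<epsilon>)"
    and Ns: "filterlim Ns at_top sequentially" and eps: "\<forall>n. eps n > 0"
    and conv: "weak_conv_top (wtop (Eset T))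
        (\<lambda>n. distr M (borel_top (wtop (Eset T))) (Lemp T W mueps Xp kp (Ns n) (eps n))) Q"
    and M: "prob_space M" and L: "L \<in> measurable M (borel_top (wtop (Eset T)))"
    and law: "distr M (borel_top (wtop (Eset T))) L = Q"
    and t: "t \<in> {0..T}"
  shows "AE \<omega> in M. moment_defect \<sigma> q t (L \<omega>) = 0"
proof (rule AE_eq_0_if_weak_conv_top[OF conv continuous_map_moment_defect _ _ _ M L law])
  show "\<forall>\<mu>\<in>topspace (wtop (Eset T)). \<bar>moment_defect \<sigma> q t \<mu>\<bar> \<le> 1 + \<bar>q t\<bar> + 2 * (pi/2)\<^sup>2"
    using abs_moment_defect_le by auto
  show "\<forall>\<mu>\<in>topspace (wtop (Eset T)). 0 \<le> moment_defect \<sigma> q t \<mu>"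
    by (simp add: moment_defect_nonneg)
  have "eventually (\<lambda>n. Ns n \<ge> 1) sequentially"
    using Ns by (simp add: filterlim_at_top)
  then show "eventually (\<lambda>n. AE \<omega> in M. moment_defect \<sigma> q t (Lemp T W mueps Xp kp (Ns n) (eps n) \<omega>) = 0)
      sequentially"
    by eventually_elim (use AE_moment_defect_Lemp_eq_0[OF T reg BMs mean sol _ _ t] eps in blast)
qed

lemma integral_X_eq_if_eq_on_rationals:
  assumes \<mu>: "\<mu> \<in> PM (Eset T)" and q: "continuous_on {0..T} q"
    and eq: "\<forall>t\<in>{0..T} \<inter> \<rat>. (\<integral>\<gamma>. apply_bcontfun (clip_X t) \<gamma> \<partial>\<mu>) = q t"
    and t: "t \<in> {0..T}"
  shows "(\<integral>\<gamma>. apply_bcontfun (fst (snd \<gamma>)) t \<partial>\<mu>) = q t"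
proof -
  have sets: "sets \<mu> = sets borel"
    using PMD[OF \<mu>] by simp
  interpret prob_space \<mu>
    using PMD[OF \<mu>] by simp
  have "(\<integral>\<gamma>. apply_bcontfun (fst (snd \<gamma>)) t \<partial>\<mu>) = (\<integral>\<gamma>. apply_bcontfun (clip_X t) \<gamma> \<partial>\<mu>)"
    using AE_PM[OF \<mu>]
    by (intro integral_cong_AE measurable_continuous_sets_borel[OF sets])
      (auto simp: apply_clip_X Eset_def intro!: continuous_intros)
  also have "\<dots> = q t"
  proof (rule continuous_on_eq_if_eq_on_rationals[OF _ q eq t])
    show "continuous_on {0..T} (\<lambda>t. \<integral>\<gamma>. apply_bcontfun (clip_X t) \<gamma> \<partial>\<mu>)"
    proof (rule continuous_on_sequentiallyI)
      fix d :: "nat \<Rightarrow> real" and s :: real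
      assume d: "d \<longlonglongrightarrow> s"
      show "(\<lambda>n. \<integral>\<gamma>. apply_bcontfun (clip_X (d n)) \<gamma> \<partial>\<mu>) \<longlonglongrightarrow> (\<integral>\<gamma>. apply_bcontfun (clip_X s) \<gamma> \<partial>\<mu>)"
        by (rule integral_dominated_convergence[where w="\<lambda>_. 1"])
          (auto simp: apply_clip_X
            intro!: measurable_continuous_sets_borel[OF sets] continuous_intros tendsto_intros
              continuous_on_tendsto_compose[OF continuous_on_apply_bcontfun d])
    qed
  qed
  finally show ?thesis .
qed

lemma distr_pathmap_eq_return_if_variance_eq_0:
  assumes \<mu>: "\<mu> \<in> PM (Eset T)" and T: "T \<ge> 0"
    and var: "\<forall>t\<in>{0..T} \<inter> \<rat>. (\<integral>\<gamma>. apply_bcontfun (arctan_Y_sq \<sigma> t) \<gamma> \<partial>\<mu>)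
      = (\<integral>\<gamma>. apply_bcontfun (arctan_Y \<sigma> t) \<gamma> \<partial>\<mu>)\<^sup>2"
  shows "\<exists>c\<in>Cp T. distr \<mu> borel (pathmap \<sigma>) = return borel c"
proof -
  have sets: "sets \<mu> = sets borel"
    using PMD[OF \<mu>] by simp
  interpret prob_space \<mu>
    using PMD[OF \<mu>] by simp
  define m where "m t = (\<integral>\<gamma>. apply_bcontfun (arctan_Y \<sigma> t) \<gamma> \<partial>\<mu>)" for t
  have AE_t: "AE \<gamma> in \<mu>. arctan (apply_bcontfun (pathmap \<sigma> \<gamma>) t) = m t" if "t \<in> {0..T} \<inter> \<rat>" for t
  proof -
    let ?f = "apply_bcontfun (arctan_Y \<sigma> t)"
    have sq: "(\<lambda>\<gamma>. (?f \<gamma>)\<^sup>2) = apply_bcontfun (arctan_Y_sq \<sigma> t)"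
      by (simp add: apply_arctan_Y apply_arctan_Y_sq)
    have "integrable \<mu> ?f" "integrable \<mu> (\<lambda>\<gamma>. (?f \<gamma>)\<^sup>2)"
      unfolding sq using integrable_bcontfun[OF finite_measure_axioms sets] by auto
    moreover from this have "variance ?f = 0"
      using var that by (simp add: variance_eq sq)
    ultimately have "AE \<gamma> in \<mu>. ?f \<gamma> = m t"
      unfolding m_def by (rule AE_eq_expectation_if_variance_eq_0)
    then show ?thesis
      by (simp add: apply_arctan_Y)
  qed
  have "countable ({0..T} \<inter> \<rat>)"
    by (rule countable_subset[OF _ countable_rat]) auto
  then have "AE \<gamma> in \<mu>. \<forall>t\<in>{0..T} \<inter> \<rat>. arctan (apply_bcontfun (pathmap \<sigma> \<gamma>) t) = m t"
    using AE_t by (subst AE_ball_countable) auto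
  then have AE: "AE \<gamma> in \<mu>. (\<forall>t\<in>{0..T} \<inter> \<rat>. arctan (apply_bcontfun (pathmap \<sigma> \<gamma>) t) = m t)
      \<and> \<gamma> \<in> Eset T"
    using AE_PM[OF \<mu>] by eventually_elim blast
  then obtain \<gamma>0 where \<gamma>0: "\<forall>t\<in>{0..T} \<inter> \<rat>. arctan (apply_bcontfun (pathmap \<sigma> \<gamma>0) t) = m t"
    "\<gamma>0 \<in> Eset T"
    using eventually_happens'[OF ae_filter_bot] by blast
  from AE have "AE \<gamma> in \<mu>. pathmap \<sigma> \<gamma> = pathmap \<sigma> \<gamma>0"
  proof eventually_elim
    case (elim \<gamma>)
    then have "\<forall>s\<in>{0..T} \<inter> \<rat>. apply_bcontfun (pathmap \<sigma> \<gamma>) s = apply_bcontfun (pathmap \<sigma> \<gamma>0) s"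
      using \<gamma>0(1) arctan_eq_iff by metis
    then show ?case
      using elim \<gamma>0(2) pathmap_eq_if_eq_on_rationals[OF _ _ T] by blast
  qed
  then have "distr \<mu> borel (pathmap \<sigma>) = distr \<mu> borel (\<lambda>_. pathmap \<sigma> \<gamma>0)"
    by (intro distr_cong_AE measurable_continuous_sets_borel[OF sets] continuous_on_pathmap) auto
  also have "\<dots> = return borel (pathmap \<sigma> \<gamma>0)"
    by (rule distr_const) simp
  finally show ?thesis
    using pathmap_in_Cp[OF \<gamma>0(2)] by blast
qed

theorem mainTheorem17:
  fixes T \<sigma> :: real and q mu :: "real \<Rightarrow> real" and mueps :: "real \<Rightarrow> real \<Rightarrow> real"
    and M :: "'a measure" and F :: "real \<Rightarrow> 'a measure" and W :: "nat \<Rightarrow> real \<Rightarrow> 'a \<Rightarrow> real"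
    and X0 :: "nat \<Rightarrow> nat \<Rightarrow> 'a \<Rightarrow> real" and nu0 :: "real measure"
    and Xp kp :: "nat \<Rightarrow> real \<Rightarrow> nat \<Rightarrow> real \<Rightarrow> 'a \<Rightarrow> real"
    and Ns :: "nat \<Rightarrow> nat" and eps :: "nat \<Rightarrow> real"
    and Q :: "(path \<times> path \<times> path) measure measure"
    and L :: "'a \<Rightarrow> (path \<times> path \<times> path) measure"
  assumes T_pos: "T > 0"
    and M_cond: "condM mu" and Q_cond: "condQ T q" and reg: "regularization mu mueps"
    and prob: "prob_space M" and usual: "usual_conditions M F"
    and BMs: "indep_BMs M F W {1..}"
    and X0_meas: "\<forall>N\<ge>1. \<forall>i\<in>{1..N}. X0 N i \<in> borel_measurable (F 0) \<and> (\<forall>\<omega>\<in>space M. X0 N i \<omega> \<in> {0..1})"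
    and X0_mean: "\<forall>N\<ge>1. AE \<omega> in M. (\<Sum>i\<in>{1..N}. X0 N i \<omega>) / real N = q 0"
    and nu0: "nu0 \<in> PM {0..1}"
    and X0_conv: "weak_conv_top (wtop {0..1})
        (\<lambda>N. distr M (borel_top (wtop {0..1})) (\<lambda>\<omega>. emp N (\<lambda>i. X0 N i \<omega>)))
        (return (borel_top (wtop {0..1})) nu0)"
    and sol: "\<forall>N\<ge>1. \<forall>\<epsilon>>0. particle_solution M F T \<sigma> q (mueps \<epsilon>) N (X0 N) W (Xp N \<epsilon>) (kp N \<epsilon>)"
    and Ns: "filterlim Ns at_top sequentially" and eps_pos: "\<forall>n. eps n > 0" and eps: "eps \<longlonglongrightarrow> 0"
    and L_conv: "weak_conv_top (wtop (Eset T))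
        (\<lambda>n. distr M (borel_top (wtop (Eset T))) (Lemp T W mueps Xp kp (Ns n) (eps n))) Q"
    and Q: "sets Q = sets (borel_top (wtop (Eset T)))" "prob_space Q"
    and L_meas: "L \<in> measurable M (borel_top (wtop (Eset T)))"
    and L_law: "distr M (borel_top (wtop (Eset T))) L = Q"
  shows "AE \<omega> in M.
           (\<forall>t\<in>{0..T}. (\<integral>\<gamma>. apply_bcontfun (fst (snd \<gamma>)) t \<partial>(L \<omega>)) = q t)
         \<and> (\<exists>c\<in>Cp T. distr (L \<omega>) borel (pathmap \<sigma>) = return borel c)"
proof -
  have q: "continuous_on {0..T} q"
    using Q_cond unfolding condQ_def by (auto intro: lipschitz_on_continuous_on)
  have "AE \<omega> in M. moment_defect \<sigma> q t (L \<omega>) = 0" if "t \<in> {0..T}" for t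
    by (rule AE_moment_defect_L_eq_0[OF less_imp_le[OF T_pos] reg BMs X0_mean sol Ns eps_pos L_conv prob L_meas L_law that])
  then have "AE \<omega> in M. \<forall>t\<in>{0..T} \<inter> \<rat>. moment_defect \<sigma> q t (L \<omega>) = 0"
    by (subst AE_ball_countable) (auto intro: countable_subset[OF _ countable_rat])
  moreover have "AE \<omega> in M. L \<omega> \<in> PM (Eset T)"
    using measurable_space[OF L_meas] by simp
  ultimately show ?thesis
  proof eventually_elim
    case (elim \<omega>)
    then show ?case
      unfolding moment_defect_eq_0_iff
      using integral_X_eq_if_eq_on_rationals[OF elim(2) q]
        distr_pathmap_eq_return_if_variance_eq_0[OF elim(2) less_imp_le[OF T_pos]]
      by blast
  qed
qed

end
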